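(* Let $\mathbb{F}$ be a field of characteristic not $2$. The map $w\mapsto w^3$ belongs to $SD(\mathbb{F})\setminus\operatorname{Aut}(\mathbb{F})$ if and only if $\mathbb{F}=\mathbb{F}_5$.
   Context: For fields $\mathbb{F},\widetilde{\mathbb{F}}$, a map $f:\mathbb{F}\to\widetilde{\mathbb{F}}$ is called an SD-map if for all $x\neq y$ in $\mathbb{F}$ one has $f(x)\neq f(y)$ and \[ f\left(\frac{x+y}{x-y}\right)=\frac{f(x)+f(y)}{f(x)-f(y)}. \] For a field $\mathbb{F}$, $SD(\mathbb{F})$ denotes the set of surjective SD-maps $f:\mathbb{F}\to\mathbb{F}$. $\operatorname{Aut}(\mathbb{F})$ is the group of field automorphisms of $\mathbb{F}$; $\mathbb{F}_5$ is the field with $5$ elements. *)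

theory Defs
  imports Main
begin

definition SD_map :: "('a::field \<Rightarrow> 'b::field) \<Rightarrow> bool" where
  "SD_map f \<longleftrightarrow> (\<forall>x y. x \<noteq> y \<longrightarrow>
      f x \<noteq> f y \<and> f ((x + y) / (x - y)) = (f x + f y) / (f x - f y))"

definition SD :: "('a::field \<Rightarrow> 'a) set" where
  "SD = {f. SD_map f \<and> surj f}"

definition Aut :: "('a::field \<Rightarrow> 'a) set" where
  "Aut = {f. bij f \<and> (\<forall>x y. f (x + y) = f x + f y) \<and>
             (\<forall>x y. f (x * y) = f x * f y) \<and> f 1 = 1}"

end

theory Submission
  imports Defs "HOL-Number_Theory.Residues"
begin

text \<open>
  Over a common denominator the SD equation for the cube reads \<open>6xy(x\<^sup>4 - y\<^sup>4) = 0\<close>.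
  In characteristic 3 cubing is the Frobenius map, so a bijective SD cube map is already an
  automorphism. Otherwise \<open>6 \<noteq> 0\<close>, cubing is not additive, and taking \<open>y = 1\<close> shows that the
  cube is an SD-map exactly when \<open>x\<^sup>5 = x\<close> for all \<open>x\<close>. This identity forces \<open>5 = 0\<close>
  (from \<open>2\<^sup>5 = 2\<close>), and then \<open>x\<^sup>5 - x = x(x - 1)(x - 2)(x - 3)(x - 4)\<close> shows that the field
  is the prime field \<open>\<bbbF>\<^sub>5\<close>; conversely, \<open>\<bbbF>\<^sub>5\<close> satisfies the identity by Fermat's little theorem.
\<close>

lemma of_nat_card_UNIV_eq_0: "of_nat (card (UNIV :: 'a::ring_1 set)) = (0 :: 'a)"
  by (simp add: of_nat_eq_0_iff_char_dvd CHAR_dvd_CARD)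

lemma power_card_UNIV_eq_self:
  fixes x :: "'a::field"
  assumes "finite (UNIV :: 'a set)"
  shows "x ^ card (UNIV :: 'a set) = x"
proof (cases "x = 0")
  case True
  then show ?thesis
    using assms by (simp add: finite_UNIV_card_ge_0)
next
  case False
  let ?U = "UNIV - {0 :: 'a}"
  have "(\<Prod>y\<in>?U. x * y) = (\<Prod>y\<in>?U. y)"
    by (rule prod.reindex_bij_witness[of _ "\<lambda>y. y / x" "\<lambda>y. x * y"]) (use False in auto)
  then have "x ^ card ?U * \<Prod>?U = 1 * \<Prod>?U"
    by (simp add: prod.distrib)
  moreover have "\<Prod>?U \<noteq> 0"
    using assms by simp
  ultimately have "x ^ card ?U = 1"
    by simp
  moreover have card_UNIV: "card (UNIV :: 'a set) = Suc (card ?U)"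
    using assms by (simp add: card_Diff_singleton finite_UNIV_card_ge_0)
  ultimately show ?thesis
    unfolding card_UNIV power_Suc by simp
qed

lemma CHAR_eq_prime:
  assumes "prime p" "of_nat p = (0 :: 'a::{semiring_1, zero_neq_one})"
  shows "CHAR('a) = p"
proof -
  have "CHAR('a) dvd p"
    using assms(2) by (simp add: of_nat_eq_0_iff_char_dvd)
  then show ?thesis
    using assms(1) CHAR_not_1 by (auto simp: prime_nat_iff)
qed

lemma card_image_of_nat_lessThan_CHAR:
  "card (of_nat ` {..<CHAR('a)} :: 'a::semiring_1_cancel set) = CHAR('a)"
proof -
  have "inj_on (of_nat :: nat \<Rightarrow> 'a) {..<CHAR('a)}"
    by (auto intro!: inj_onI simp: of_nat_eq_iff_cong_CHAR cong_def)
  then show ?thesis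
    by (simp add: card_image)
qed

lemma power5_minus_self_char_5:
  fixes x :: "'a::comm_ring_1"
  assumes "(5 :: 'a) = 0"
  shows "x ^ 5 - x = x * (x - 1) * (x - 2) * (x - 3) * (x - 4)"
proof -
  have "x ^ 5 - x = x * (x - 1) * (x - 2) * (x - 3) * (x - 4)
                    + 5 * (2 * x ^ 4 - 7 * x ^ 3 + 10 * x ^ 2 - 5 * x)"
    by (simp add: algebra_simps eval_nat_numeral)
  then show ?thesis
    using assms by simp
qed

lemma power5_eq_self_iff_card_5:
  assumes "(6 :: 'a::field) \<noteq> 0"
  shows "(\<forall>x :: 'a. x ^ 5 = x) \<longleftrightarrow> finite (UNIV :: 'a set) \<and> card (UNIV :: 'a set) = 5"
proof
  assume power5: "\<forall>x :: 'a. x ^ 5 = x"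
  have "(6 :: 'a) * 5 = 2 ^ 5 - 2"
    by simp
  also have "\<dots> = 0"
    using power5 by simp
  finally have five: "(5 :: 'a) = 0"
    using assms mult_eq_0_iff by blast
  then have char: "CHAR('a) = 5"
    by (intro CHAR_eq_prime) simp_all
  have "x \<in> of_nat ` {..<5}" for x :: 'a
  proof -
    have "x ^ 5 - x = 0"
      using power5 by simp
    then have "x * (x - 1) * (x - 2) * (x - 3) * (x - 4) = 0"
      by (simp only: power5_minus_self_char_5[OF five])
    then have "x \<in> {0, 1, 2, 3, 4}"
      by auto
    also have "{0, 1, 2, 3, 4} = (of_nat ` {..<5} :: 'a set)"
      by (simp add: numeral_eq_Suc lessThan_Suc insert_commute)
    finally show ?thesis .
  qed
  then have "UNIV = (of_nat ` {..<CHAR('a)} :: 'a set)"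
    using char by auto
  then show "finite (UNIV :: 'a set) \<and> card (UNIV :: 'a set) = 5"
    using card_image_of_nat_lessThan_CHAR[where 'a = 'a] char by (metis finite_imageI finite_lessThan)
next
  assume "finite (UNIV :: 'a set) \<and> card (UNIV :: 'a set) = 5"
  with power_card_UNIV_eq_self[where 'a = 'a] show "\<forall>x :: 'a. x ^ 5 = x"
    by simp
qed

lemma cube_SD_identity_iff:
  fixes x y :: "'a::field"
  assumes "x \<noteq> y" "x ^ 3 \<noteq> y ^ 3"
  shows "((x + y) / (x - y)) ^ 3 = (x ^ 3 + y ^ 3) / (x ^ 3 - y ^ 3) \<longleftrightarrow> 6 * x * y * (x ^ 4 - y ^ 4) = 0"
proof -
  have "((x + y) / (x - y)) ^ 3 = (x ^ 3 + y ^ 3) / (x ^ 3 - y ^ 3) \<longleftrightarrow>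
        (x + y) ^ 3 * (x ^ 3 - y ^ 3) - (x ^ 3 + y ^ 3) * (x - y) ^ 3 = 0"
    using assms by (simp add: power_divide field_simps)
  also have "(x + y) ^ 3 * (x ^ 3 - y ^ 3) - (x ^ 3 + y ^ 3) * (x - y) ^ 3 = 6 * x * y * (x ^ 4 - y ^ 4)"
    by (simp add: algebra_simps power2_eq_square power3_eq_cube power4_eq_xxxx)
  finally show ?thesis .
qed

lemma cube_in_SD_iff_power5_eq_self:
  assumes "(6 :: 'a::field) \<noteq> 0"
  shows "(\<lambda>w :: 'a. w ^ 3) \<in> SD \<longleftrightarrow> (\<forall>x :: 'a. x ^ 5 = x)"
proof
  assume "(\<lambda>w :: 'a. w ^ 3) \<in> SD"
  then have SD_cube: "SD_map (\<lambda>w :: 'a. w ^ 3)"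
    by (simp add: SD_def)
  show "\<forall>x :: 'a. x ^ 5 = x"
  proof
    fix x :: 'a
    show "x ^ 5 = x"
    proof (cases "x = 1")
      case False
      with SD_cube have "x ^ 3 \<noteq> 1 ^ 3" "((x + 1) / (x - 1)) ^ 3 = (x ^ 3 + 1 ^ 3) / (x ^ 3 - 1 ^ 3)"
        unfolding SD_map_def by blast+
      with False have "6 * x * 1 * (x ^ 4 - 1 ^ 4) = 0"
        using cube_SD_identity_iff by blast
      then have "x * (x ^ 4 - 1) = 0"
        using assms by simp
      then show ?thesis
        by (simp add: algebra_simps flip: power_Suc)
    qed simp
  qed
next
  assume power5: "\<forall>x :: 'a. x ^ 5 = x"
  have cube_cube: "(x ^ 3) ^ 3 = x" for x :: 'a
  proof -
    have "(x ^ 3) ^ 3 = x ^ 5 * x ^ 4"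
      by (simp flip: power_mult power_add)
    also have "\<dots> = x ^ 5"
      using power5 by (simp flip: power_Suc)
    finally show ?thesis
      using power5 by simp
  qed
  then have inj: "x ^ 3 \<noteq> y ^ 3" if "x \<noteq> y" for x y :: 'a
    using that by metis
  have "6 * x * y * (x ^ 4 - y ^ 4) = 0" for x y :: 'a
  proof -
    have "6 * x * y * (x ^ 4 - y ^ 4) = 6 * (x ^ 5 * y - x * y ^ 5)"
      by (simp add: algebra_simps eval_nat_numeral)
    then show ?thesis
      using power5 by simp
  qed
  with inj have "SD_map (\<lambda>w :: 'a. w ^ 3)"
    unfolding SD_map_def using cube_SD_identity_iff by blast
  moreover have "surj (\<lambda>w :: 'a. w ^ 3)"
    using cube_cube by (metis surjI)
  ultimately show "(\<lambda>w :: 'a. w ^ 3) \<in> SD"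
    by (simp add: SD_def)
qed

lemma cube_in_Aut_if_in_SD:
  assumes "(3 :: 'a::field) = 0" "(\<lambda>w :: 'a. w ^ 3) \<in> SD"
  shows "(\<lambda>w :: 'a. w ^ 3) \<in> Aut"
proof -
  have "bij (\<lambda>w :: 'a. w ^ 3)"
    using assms(2) unfolding SD_def SD_map_def bij_def inj_def by blast
  moreover have "(x + y) ^ 3 = x ^ 3 + y ^ 3" for x y :: 'a
  proof -
    have "(x + y) ^ 3 = x ^ 3 + y ^ 3 + 3 * (x ^ 2 * y + x * y ^ 2)"
      by (simp add: algebra_simps power2_eq_square power3_eq_cube)
    then show ?thesis
      using assms(1) by simp
  qed
  ultimately show ?thesis
    by (simp add: Aut_def power_mult_distrib)
qed

lemma cube_notin_Aut:
  assumes "(6 :: 'a::field) \<noteq> 0"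
  shows "(\<lambda>w :: 'a. w ^ 3) \<notin> Aut"
proof
  assume "(\<lambda>w :: 'a. w ^ 3) \<in> Aut"
  then have "(1 + 1 :: 'a) ^ 3 = 1 ^ 3 + 1 ^ 3"
    unfolding Aut_def by blast
  moreover have "(6 :: 'a) = (1 + 1) ^ 3 - (1 ^ 3 + 1 ^ 3)"
    by simp
  ultimately show False
    using assms by simp
qed

theorem theorem1p6:
  assumes "(2::'a::field) \<noteq> 0"
  shows "((\<lambda>w::'a. w ^ 3) \<in> SD - Aut) \<longleftrightarrow> finite (UNIV::'a set) \<and> card (UNIV::'a set) = 5"
proof (cases "(3 :: 'a) = 0")
  case True
  have "\<not> (finite (UNIV :: 'a set) \<and> card (UNIV :: 'a set) = 5)"
  proof
    assume "finite (UNIV :: 'a set) \<and> card (UNIV :: 'a set) = 5"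
    then have "(5 :: 'a) = 0"
      using of_nat_card_UNIV_eq_0[where 'a = 'a] by simp
    moreover have "(2 :: 'a) = 5 - 3"
      by simp
    ultimately have "(2 :: 'a) = 0"
      using True by simp
    with assms show False ..
  qed
  then show ?thesis
    using cube_in_Aut_if_in_SD[OF True] by blast
next
  case False
  with assms have six: "(6 :: 'a) \<noteq> 0"
    using mult_eq_0_iff[of "2 :: 'a" 3] by simp
  show ?thesis
    using cube_in_SD_iff_power5_eq_self[OF six] power5_eq_self_iff_card_5[OF six] cube_notin_Aut[OF six]
    by simp
qed

end
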